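(* Let $A\neq 0$ be a real symmetric $n\times n$ matrix such that $$\mathbb{1}^\top A\mathbb{1}\ge\sqrt{(n-k)^2+k^2}\,\|A\|_F$$ for some integer $k$ with $1\le k<n/2$. Then the spectral radius $\rho(A)$ is a simple eigenvalue of $A$ (equal to its largest eigenvalue), and a corresponding eigenvector can be chosen (up to sign) so that it has at least $n-k+1$ nonnegative entries, of which at least $n-k$ are strictly positive.
   Context: $\mathbb{1}\in\mathbb{R}^n$ is the all-ones vector and $\|A\|_F=\sqrt{\mathrm{tr}(AA^\top)}$ is the Frobenius norm. *)

theory Defs
  imports "Jordan_Normal_Form.Spectral_Radius"
begin

definition mat_tr :: "'a :: comm_ring_1 mat \<Rightarrow> 'a" where
  "mat_tr A = (\<Sum>i<dim_row A. A $$ (i, i))"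

definition frobenius_norm :: "real mat \<Rightarrow> real" where
  "frobenius_norm A = sqrt (mat_tr (A * transpose_mat A))"

end

theory Submission
  imports Defs
begin

text \<open>
  Diagonalise \<open>A = U D U\<^sup>T\<close> with \<open>U\<close> orthogonal and let \<open>d\<^sub>i\<close> be the eigenvalues and
  \<open>c\<^sub>i = \<langle>\<one>, u\<^sub>i\<rangle>\<close> the coordinates of the all-ones vector in the eigenbasis, so that
  \<open>\<Sum> c\<^sub>i\<^sup>2 = n\<close>, \<open>\<one>\<^sup>T A \<one> = \<Sum> d\<^sub>i c\<^sub>i\<^sup>2\<close> and \<open>\<parallel>A\<parallel>\<^sub>F\<^sup>2 = \<Sum> d\<^sub>i\<^sup>2\<close>. Write \<open>s = (n-k)\<^sup>2 + k\<^sup>2\<close>, so that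
  \<open>n\<^sup>2 < 2s\<close>. If some other eigenvalue had modulus at least the largest one \<open>a\<close>, then
  \<open>\<Sum> d\<^sub>i c\<^sub>i\<^sup>2 \<le> a n\<close> while \<open>\<Sum> d\<^sub>i\<^sup>2 \<ge> 2a\<^sup>2\<close>, contradicting the hypothesis; so \<open>a\<close> is the spectral radius
  and a simple eigenvalue. With \<open>b < a\<close> the largest other modulus and \<open>x = c\<^sub>i\<^sub>0\<^sup>2\<close>, the hypothesis
  becomes \<open>s (a\<^sup>2 + b\<^sup>2) \<le> (a x + b (n - x))\<^sup>2\<close>, which forces \<open>x \<ge> n - k\<close>. The unit eigenvector
  \<open>\<plusminus>u\<^sub>i\<^sub>0\<close> then has coordinate sum at least \<open>\<surd>(n-k)\<close>. By Cauchy-Schwarz a set of \<open>m\<close> entries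
  sums to at most \<open>\<surd>m\<close>, so the positive entries, which carry at least the whole sum, number at
  least \<open>n - k\<close>; if only \<open>n - k\<close> entries were nonnegative, the remaining negative ones would
  make the bound strict.
\<close>

lemma mat_tr_mult_commute:
  fixes X :: "'a::comm_ring_1 mat"
  assumes "X \<in> carrier_mat n m" "Y \<in> carrier_mat m n"
  shows "mat_tr (X * Y) = mat_tr (Y * X)"
  using assms unfolding mat_tr_def
  by (simp add: scalar_prod_def atLeast0LessThan mult.commute) (rule sum.swap)

lemma sum_squared_le_card_mult_sum_squares:
  fixes f :: "'a \<Rightarrow> real"
  shows "(\<Sum>i\<in>I. f i)\<^sup>2 \<le> real (card I) * (\<Sum>i\<in>I. (f i)\<^sup>2)"
proof (cases "card I = 0")
  case True
  then show ?thesis by (cases "finite I") auto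
next
  case False
  define m where "m = (\<Sum>i\<in>I. f i) / card I"
  have "0 \<le> (\<Sum>i\<in>I. (f i - m)\<^sup>2)" by (simp add: sum_nonneg)
  also have "\<dots> = (\<Sum>i\<in>I. (f i)\<^sup>2) - 2 * m * (\<Sum>i\<in>I. f i) + card I * m\<^sup>2"
    by (simp add: power2_diff sum.distrib sum_subtractf sum_distrib_left sum_distrib_right mult_ac)
  also have "\<dots> = (\<Sum>i\<in>I. (f i)\<^sup>2) - (\<Sum>i\<in>I. f i)\<^sup>2 / card I"
    using False by (simp add: m_def power2_eq_square field_simps)
  finally show ?thesis using False by (simp add: field_simps)
qed

lemma finite_argmax:
  fixes f :: "'a \<Rightarrow> 'b::linorder"
  assumes "finite S" "S \<noteq> {}"
  obtains x where "x \<in> S" "\<And>y. y \<in> S \<Longrightarrow> f y \<le> f x"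
proof -
  have "Max (f ` S) \<in> f ` S" using assms by (intro Max_in) auto
  then obtain x where "x \<in> S" "f x = Max (f ` S)" by auto
  then show thesis using Max_ge[of "f ` S"] assms by (intro that) auto
qed

definition reflection_mat :: "nat \<Rightarrow> real vec \<Rightarrow> real mat" where
  "reflection_mat n w = mat n n (\<lambda>(i, j). of_bool (i = j) - 2 / (w \<bullet> w) * w $ i * w $ j)"

lemma reflection_mat_carrier: "reflection_mat n w \<in> carrier_mat n n"
  unfolding reflection_mat_def by simp

lemma transpose_reflection_mat: "transpose_mat (reflection_mat n w) = reflection_mat n w"
  unfolding reflection_mat_def by (rule eq_matI) auto

lemma reflection_mat_involutive:
  assumes w: "w \<in> carrier_vec n" and w0: "w \<bullet> w \<noteq> 0"
  shows "reflection_mat n w * reflection_mat n w = 1\<^sub>m n"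
proof (rule eq_matI)
  fix i j assume "i < dim_row (1\<^sub>m n)" "j < dim_col (1\<^sub>m n)"
  then have ij: "i < n" "j < n" by auto
  define t where "t = 2 / (w \<bullet> w)"
  have ww: "w \<bullet> w = (\<Sum>k<n. w $ k * w $ k)"
    using w by (simp add: scalar_prod_def atLeast0LessThan)
  have "(reflection_mat n w * reflection_mat n w) $$ (i, j)
      = (\<Sum>k<n. (of_bool (i = k) - t * w $ i * w $ k) * (of_bool (k = j) - t * w $ k * w $ j))"
    using ij by (simp add: reflection_mat_def t_def scalar_prod_def atLeast0LessThan)
  also have "\<dots> = (\<Sum>k<n. of_bool (i = k) * of_bool (k = j) - t * w $ j * (of_bool (i = k) * w $ k)
      - t * w $ i * (of_bool (k = j) * w $ k) + t * t * w $ i * w $ j * (w $ k * w $ k))"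
    by (intro sum.cong refl) (simp add: algebra_simps)
  also have "\<dots> = of_bool (i = j) - t * w $ j * w $ i - t * w $ i * w $ j + t * t * w $ i * w $ j * (w \<bullet> w)"
    using ij unfolding ww by (simp add: sum.distrib sum_subtractf flip: sum_distrib_left)
  also have "\<dots> = of_bool (i = j) + (t * (w \<bullet> w) - 2) * t * w $ i * w $ j"
    by (simp add: algebra_simps)
  also have "t * (w \<bullet> w) = 2" using w0 by (simp add: t_def)
  finally show "(reflection_mat n w * reflection_mat n w) $$ (i, j) = 1\<^sub>m n $$ (i, j)"
    using ij by simp
qed (auto simp: reflection_mat_def)

lemma orthogonal_mat_with_first_col:
  fixes u :: "real vec"
  assumes u: "u \<in> carrier_vec n" and n: "0 < n" and unit: "u \<bullet> u = 1"
  shows "\<exists>W \<in> carrier_mat n n. transpose_mat W * W = 1\<^sub>m n \<and> col W 0 = u"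
  \<comment> \<open>the reflection in the hyperplane orthogonal to \<open>u - e\<^sub>0\<close> swaps \<open>e\<^sub>0\<close> and \<open>u\<close>\<close>
proof (cases "u = unit_vec n 0")
  case True
  then show ?thesis using n by (intro bexI[of _ "1\<^sub>m n"]) auto
next
  case False
  define w where "w = u - unit_vec n 0"
  have w: "w \<in> carrier_vec n" using u by (simp add: w_def)
  have ww: "w \<bullet> w = 2 - 2 * u $ 0"
    using u n unit by (simp add: w_def minus_scalar_prod_distrib scalar_prod_minus_distrib
        comm_scalar_prod[of "unit_vec n 0" n u])
  have "u $ 0 \<noteq> 1"
  proof
    assume "u $ 0 = 1"
    then have "w \<bullet> w = 0" using ww by simp
    then have "w = 0\<^sub>v n" using conjugate_square_eq_0_vec[OF w] by simp
    then show False using False u unfolding w_def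
      by (metis comm_add_vec minus_add_minus_vec minus_cancel_vec uminus_eq_vec unit_vec_carrier zero_minus_vec)
  qed
  then have w0: "w \<bullet> w \<noteq> 0" using ww by simp
  define W where "W = reflection_mat n w"
  have "col W 0 = u"
  proof (rule eq_vecI)
    fix i assume "i < dim_vec u"
    then have i: "i < n" using u by simp
    have coeff: "2 / (w \<bullet> w) * w $ 0 = -1" using ww w0 n u by (simp add: w_def field_simps)
    have "col W 0 $ i = of_bool (i = 0) - 2 / (w \<bullet> w) * w $ 0 * w $ i"
      using i n by (simp add: W_def reflection_mat_def col_def mult_ac)
    also have "\<dots> = of_bool (i = 0) + w $ i" by (simp only: coeff)
    also have "\<dots> = u $ i" using i u by (simp add: w_def)
    finally show "col W 0 $ i = u $ i" .
  qed (use u in \<open>simp add: W_def reflection_mat_def\<close>)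
  then show ?thesis
    using reflection_mat_involutive[OF w w0]
    by (intro bexI[of _ W]) (auto simp: W_def transpose_reflection_mat reflection_mat_carrier)
qed

lemma orthogonal_mat_transpose_right:
  fixes U :: "'a::field mat"
  assumes "U \<in> carrier_mat n n" "transpose_mat U * U = 1\<^sub>m n"
  shows "U * transpose_mat U = 1\<^sub>m n"
  using mat_mult_left_right_inverse[OF _ assms(1,2)] assms(1) by simp

locale orthogonal_diagonalization =
  fixes n :: nat and A U D :: "real mat"
  assumes carrier_U: "U \<in> carrier_mat n n" and carrier_D: "D \<in> carrier_mat n n"
    and diagonal_D: "diagonal_mat D"
    and orthogonal_U: "transpose_mat U * U = 1\<^sub>m n"
    and decomposition: "A = U * D * transpose_mat U"

lemma orthogonal_diagonalization_conjugate:
  fixes A W :: "real mat"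
  assumes A: "A \<in> carrier_mat n n" and W: "W \<in> carrier_mat n n" "transpose_mat W * W = 1\<^sub>m n"
    and diag: "orthogonal_diagonalization n (transpose_mat W * A * W) U D"
  shows "orthogonal_diagonalization n A (W * U) D"
proof -
  interpret orthogonal_diagonalization n "transpose_mat W * A * W" U D by (fact diag)
  have WWT: "W * transpose_mat W = 1\<^sub>m n" by (rule orthogonal_mat_transpose_right[OF W])
  note assoc = assoc_mult_mat[of _ n n _ n _ n]
  show ?thesis
  proof
    have "transpose_mat (W * U) * (W * U) = transpose_mat U * (transpose_mat W * W * U)"
      using W(1) carrier_U by (simp add: transpose_mult[of _ n n] assoc)
    also have "\<dots> = 1\<^sub>m n" using W(2) carrier_U orthogonal_U by simp
    finally show "transpose_mat (W * U) * (W * U) = 1\<^sub>m n" .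
    have "W * U * D * transpose_mat (W * U) = W * (U * D * transpose_mat U) * transpose_mat W"
      using W carrier_U carrier_D by (simp add: transpose_mult[of _ n n] assoc)
    also have "\<dots> = (W * transpose_mat W) * A * (W * transpose_mat W)"
      using A W by (simp flip: decomposition add: assoc)
    finally show "A = W * U * D * transpose_mat (W * U)" using A WWT by simp
  qed (use W carrier_U carrier_D diagonal_D in auto)
qed

lemma orthogonal_diagonalization_four_block:
  fixes l :: real
  assumes "orthogonal_diagonalization n A V D"
  shows "orthogonal_diagonalization (Suc n) (four_block_mat (mat 1 1 (\<lambda>_. l)) (0\<^sub>m 1 n) (0\<^sub>m n 1) A)
           (four_block_mat (1\<^sub>m 1) (0\<^sub>m 1 n) (0\<^sub>m n 1) V) (four_block_mat (mat 1 1 (\<lambda>_. l)) (0\<^sub>m 1 n) (0\<^sub>m n 1) D)"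
proof -
  interpret orthogonal_diagonalization n A V D by (fact assms)
  let ?L = "mat 1 1 (\<lambda>_. l) :: real mat"
  have L: "?L \<in> carrier_mat 1 1" by simp
  have VT: "transpose_mat V \<in> carrier_mat n n" and VD: "V * D \<in> carrier_mat n n"
    using carrier_U carrier_D by auto
  have BT: "transpose_mat (four_block_mat (1\<^sub>m 1) (0\<^sub>m 1 n) (0\<^sub>m n 1) V)
      = four_block_mat (1\<^sub>m 1) (0\<^sub>m 1 n) (0\<^sub>m n 1) (transpose_mat V)"
    using carrier_U by (subst transpose_four_block_mat) auto
  have BD: "four_block_mat (1\<^sub>m 1) (0\<^sub>m 1 n) (0\<^sub>m n 1) V * four_block_mat ?L (0\<^sub>m 1 n) (0\<^sub>m n 1) D
      = four_block_mat ?L (0\<^sub>m 1 n) (0\<^sub>m n 1) (V * D)"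
    using carrier_U carrier_D
    by (subst mult_four_block_mat[OF one_carrier_mat zero_carrier_mat zero_carrier_mat carrier_U
          L zero_carrier_mat zero_carrier_mat carrier_D]) auto
  have BDBT: "four_block_mat (1\<^sub>m 1) (0\<^sub>m 1 n) (0\<^sub>m n 1) V * four_block_mat ?L (0\<^sub>m 1 n) (0\<^sub>m n 1) D
      * transpose_mat (four_block_mat (1\<^sub>m 1) (0\<^sub>m 1 n) (0\<^sub>m n 1) V)
      = four_block_mat ?L (0\<^sub>m 1 n) (0\<^sub>m n 1) A"
    unfolding BD BT decomposition using carrier_U carrier_D
    by (subst mult_four_block_mat[OF L zero_carrier_mat zero_carrier_mat VD
          one_carrier_mat zero_carrier_mat zero_carrier_mat VT]) auto
  show ?thesis
  proof
    show "transpose_mat (four_block_mat (1\<^sub>m 1) (0\<^sub>m 1 n) (0\<^sub>m n 1) V) * four_block_mat (1\<^sub>m 1) (0\<^sub>m 1 n) (0\<^sub>m n 1) V = 1\<^sub>m (Suc n)"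
      unfolding BT using carrier_U orthogonal_U
      by (subst mult_four_block_mat[OF one_carrier_mat zero_carrier_mat zero_carrier_mat VT
            one_carrier_mat zero_carrier_mat zero_carrier_mat carrier_U]) auto
    show "four_block_mat ?L (0\<^sub>m 1 n) (0\<^sub>m n 1) A =
        four_block_mat (1\<^sub>m 1) (0\<^sub>m 1 n) (0\<^sub>m n 1) V * four_block_mat ?L (0\<^sub>m 1 n) (0\<^sub>m n 1) D
        * transpose_mat (four_block_mat (1\<^sub>m 1) (0\<^sub>m 1 n) (0\<^sub>m n 1) V)"
      by (rule BDBT[symmetric])
    show "diagonal_mat (four_block_mat ?L (0\<^sub>m 1 n) (0\<^sub>m n 1) D)"
      using diagonal_D carrier_D unfolding diagonal_mat_def by auto
  qed (use carrier_U carrier_D in auto)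
qed

lemma real_symmetric_mat_eigenvalue_real:
  fixes A :: "real mat"
  assumes A: "A \<in> carrier_mat n n" and sym: "transpose_mat A = A"
    and ev: "eigenvalue (map_mat complex_of_real A) \<mu>"
  shows "\<mu> \<in> \<real>"
proof -
  obtain v where v: "v \<in> carrier_vec n" "v \<noteq> 0\<^sub>v n" "map_mat complex_of_real A *\<^sub>v v = \<mu> \<cdot>\<^sub>v v"
    using ev A unfolding eigenvalue_def eigenvector_def by auto
  have symA: "A $$ (i, j) = A $$ (j, i)" if "i < n" "j < n" for i j
    using arg_cong[OF sym, of "\<lambda>M. M $$ (j, i)"] that A by auto
  have Av: "(\<Sum>j<n. of_real (A $$ (i, j)) * v $ j) = \<mu> * v $ i" if "i < n" for i
    using arg_cong[OF v(3), of "\<lambda>w. w $ i"] that A v(1)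
    by (simp add: scalar_prod_def atLeast0LessThan)
  define s where "s = (\<Sum>i<n. cnj (v $ i) * (\<Sum>j<n. of_real (A $$ (i, j)) * v $ j))"
  define r where "r = (\<Sum>i<n. (cmod (v $ i))\<^sup>2)"
  have "s = \<mu> * (\<Sum>i<n. cnj (v $ i) * v $ i)"
    unfolding s_def by (simp add: Av sum_distrib_left mult.left_commute)
  also have "(\<Sum>i<n. cnj (v $ i) * v $ i) = of_real r"
    unfolding r_def of_real_sum by (intro sum.cong) (auto simp: complex_norm_square[symmetric] mult.commute)
  finally have s: "s = \<mu> * of_real r" .
  \<comment> \<open>\<open>s = v\<^sup>* A v\<close> is real because \<open>A\<close> is real symmetric\<close>
  have "cnj s = (\<Sum>j<n. \<Sum>i<n. v $ i * of_real (A $$ (i, j)) * cnj (v $ j))"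
    unfolding s_def by (subst sum.swap) (simp add: sum_distrib_left mult_ac)
  also have "\<dots> = s"
    unfolding s_def by (auto simp: sum_distrib_left symA mult_ac intro!: sum.cong)
  finally have "s \<in> \<real>" by (metis Reals_cnj_iff)
  obtain i where "i < n" "v $ i \<noteq> 0" using v(1,2) by (metis eq_vecI carrier_vecD index_zero_vec)
  then have "0 < r" unfolding r_def by (intro sum_pos2[of _ i]) auto
  then show ?thesis using \<open>s \<in> \<real>\<close> s
    by (metis Reals_of_real nonzero_mult_div_cancel_right of_real_eq_0_iff less_irrefl Reals_divide)
qed

lemma real_symmetric_mat_has_eigenvalue:
  fixes A :: "real mat"
  assumes A: "A \<in> carrier_mat n n" and sym: "transpose_mat A = A" and n: "0 < n"
  shows "\<exists>l. eigenvalue A l"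
proof -
  have C: "map_mat complex_of_real A \<in> carrier_mat n n" using A by simp
  obtain \<mu> where \<mu>: "eigenvalue (map_mat complex_of_real A) \<mu>"
    using spectrum_non_empty[OF C n] unfolding spectrum_def by auto
  then obtain l where l: "\<mu> = of_real l"
    using real_symmetric_mat_eigenvalue_real[OF A sym] Reals_cases by metis
  have "poly (map_poly complex_of_real (char_poly A)) (of_real l) = 0"
    using \<mu> eigenvalue_root_char_poly[OF C] of_real_hom.char_poly_hom[OF A] l by metis
  then have "poly (char_poly A) l = 0" by simp
  then show ?thesis using eigenvalue_root_char_poly[OF A] by auto
qed

lemma eigenvalue_unit_eigenvector:
  fixes A :: "real mat"
  assumes A: "A \<in> carrier_mat n n" and ev: "eigenvalue A l"
  shows "\<exists>u. u \<in> carrier_vec n \<and> u \<bullet> u = 1 \<and> A *\<^sub>v u = l \<cdot>\<^sub>v u"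
proof -
  obtain v where v: "v \<in> carrier_vec n" "v \<noteq> 0\<^sub>v n" "A *\<^sub>v v = l \<cdot>\<^sub>v v"
    using ev A unfolding eigenvalue_def eigenvector_def by auto
  have "0 \<le> v \<bullet> v" "v \<bullet> v \<noteq> 0"
    using conjugate_square_ge_0_vec[of v] conjugate_square_eq_0_vec[OF v(1)] v(2) by auto
  then have pos: "0 < v \<bullet> v" by simp
  define u where "u = (1 / sqrt (v \<bullet> v)) \<cdot>\<^sub>v v"
  have "u \<bullet> u = 1" unfolding u_def using v pos
    by (simp add: smult_scalar_prod_distrib scalar_prod_smult_distrib)
  moreover have "A *\<^sub>v u = l \<cdot>\<^sub>v u" unfolding u_def using v A
    by (simp add: mult_mat_vec smult_smult_assoc mult.commute)
  ultimately show ?thesis using v(1) by (intro exI[of _ u]) (auto simp: u_def)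
qed

lemma orthogonal_deflation:
  fixes A W :: "real mat"
  assumes A: "A \<in> carrier_mat (Suc n) (Suc n)" and sym: "transpose_mat A = A"
    and W: "W \<in> carrier_mat (Suc n) (Suc n)" "transpose_mat W * W = 1\<^sub>m (Suc n)"
    and eig: "A *\<^sub>v col W 0 = l \<cdot>\<^sub>v col W 0"
  shows "\<exists>A' \<in> carrier_mat n n. transpose_mat A' = A' \<and>
           transpose_mat W * A * W = four_block_mat (mat 1 1 (\<lambda>_. l)) (0\<^sub>m 1 n) (0\<^sub>m n 1) A'"
proof -
  define B where "B = transpose_mat W * A * W"
  define A' where "A' = mat n n (\<lambda>(i, j). B $$ (Suc i, Suc j))"
  have B: "B \<in> carrier_mat (Suc n) (Suc n)" using A W by (simp add: B_def)
  have "transpose_mat B = transpose_mat W * transpose_mat (transpose_mat W * A)"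
    unfolding B_def by (rule transpose_mult) (use W A in auto)
  also have "transpose_mat (transpose_mat W * A) = transpose_mat A * W"
    by (subst transpose_mult) (use W A in auto)
  finally have "transpose_mat B = transpose_mat W * transpose_mat A * W"
    using A W by (simp add: assoc_mult_mat[of _ "Suc n" "Suc n"])
  then have BT: "transpose_mat B = B" using sym by (simp add: B_def)
  have symB: "B $$ (i, j) = B $$ (j, i)" if "i < Suc n" "j < Suc n" for i j
    using that B by (metis BT index_transpose_mat(1) carrier_matD)
  have col0: "B $$ (i, 0) = (if i = 0 then l else 0)" if i: "i < Suc n" for i
  proof -
    have "B $$ (i, 0) = col W i \<bullet> (A *\<^sub>v col W 0)"
      using i W A by (simp add: B_def assoc_mult_mat[of _ "Suc n" "Suc n"] mult_mat_vec_def)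
    also have "\<dots> = l * (col W i \<bullet> col W 0)" using eig W i by simp
    also have "col W i \<bullet> col W 0 = (transpose_mat W * W) $$ (i, 0)" using W(1) i by simp
    finally show ?thesis unfolding W(2) using i by simp
  qed
  have row0: "B $$ (0, j) = (if j = 0 then l else 0)" if j: "j < Suc n" for j
    using col0[OF j] symB[OF _ j, of 0] by simp
  have "transpose_mat A' = A'"
    using symB by (auto simp: A'_def intro!: eq_matI)
  moreover have "B = four_block_mat (mat 1 1 (\<lambda>_. l)) (0\<^sub>m 1 n) (0\<^sub>m n 1) A'"
    using B col0 row0 by (intro eq_matI) (auto simp: A'_def less_Suc_eq_0_disj)
  ultimately show ?thesis unfolding B_def by (intro bexI[of _ A']) (auto simp: A'_def)
qed

theorem real_symmetric_orthogonal_diagonalization: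
  fixes A :: "real mat"
  assumes "A \<in> carrier_mat n n" and "transpose_mat A = A"
  shows "\<exists>U D. orthogonal_diagonalization n A U D"
  using assms
proof (induction n arbitrary: A)
  case 0
  then have "orthogonal_diagonalization 0 A (1\<^sub>m 0) (0\<^sub>m 0 0)"
    by unfold_locales (auto intro!: eq_matI simp: diagonal_mat_def)
  then show ?case by blast
next
  case (Suc n)
  obtain l where "eigenvalue A l" using real_symmetric_mat_has_eigenvalue[OF Suc.prems] by auto
  then obtain u where u: "u \<in> carrier_vec (Suc n)" "u \<bullet> u = 1" "A *\<^sub>v u = l \<cdot>\<^sub>v u"
    using eigenvalue_unit_eigenvector[OF Suc.prems(1)] by blast
  obtain W where W: "W \<in> carrier_mat (Suc n) (Suc n)" "transpose_mat W * W = 1\<^sub>m (Suc n)" "col W 0 = u"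
    using orthogonal_mat_with_first_col[OF u(1) _ u(2)] by auto
  obtain A' where A': "A' \<in> carrier_mat n n" "transpose_mat A' = A'"
    and block: "transpose_mat W * A * W = four_block_mat (mat 1 1 (\<lambda>_. l)) (0\<^sub>m 1 n) (0\<^sub>m n 1) A'"
    using orthogonal_deflation[OF Suc.prems W(1,2)] u(3) W(3) by auto
  obtain V D where "orthogonal_diagonalization n A' V D" using Suc.IH[OF A'] by blast
  then have "orthogonal_diagonalization (Suc n) (transpose_mat W * A * W)
      (four_block_mat (1\<^sub>m 1) (0\<^sub>m 1 n) (0\<^sub>m n 1) V) (four_block_mat (mat 1 1 (\<lambda>_. l)) (0\<^sub>m 1 n) (0\<^sub>m n 1) D)"
    unfolding block by (rule orthogonal_diagonalization_four_block)
  then show ?case using orthogonal_diagonalization_conjugate[OF Suc.prems(1) W(1,2)] by blast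
qed

lemma order_prod_linear_factors:
  fixes d :: "nat \<Rightarrow> 'a::idom"
  shows "order x (\<Prod>i<n. [:- d i, 1:]) = card {i. i < n \<and> d i = x}"
proof (induction n)
  case 0
  then show ?case by simp
next
  case (Suc n)
  have "(\<Prod>i<Suc n. [:- d i, 1:]) \<noteq> 0" by (subst prod_zero_iff) auto
  then have nonzero: "(\<Prod>i<n. [:- d i, 1:]) * [:- d n, 1:] \<noteq> 0" by simp
  have last: "order x [:- d n, 1:] = of_bool (d n = x)"
    using order_power_n_n[of x 1] order_0I[of "[:- d n, 1:]" x] by auto
  have "{i. i < Suc n \<and> d i = x} = {i. i < n \<and> d i = x} \<union> (if d n = x then {n} else {})"
    by (auto simp: less_Suc_eq)
  then have card: "card {i. i < Suc n \<and> d i = x} = card {i. i < n \<and> d i = x} + of_bool (d n = x)"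
    by (auto simp: card_insert_if)
  show ?case unfolding prod.lessThan_Suc order_mult[OF nonzero] Suc last card ..
qed

lemma diagonal_mat_sum_mult:
  fixes D :: "'a::semiring_0 mat"
  assumes D: "D \<in> carrier_mat n n" "diagonal_mat D" and i: "i < n"
  shows "(\<Sum>k<n. D $$ (i, k) * f k) = D $$ (i, i) * f i"
    and "(\<Sum>k<n. f k * D $$ (k, i)) = f i * D $$ (i, i)"
proof -
  have "(\<Sum>k<n. D $$ (i, k) * f k) = (\<Sum>k<n. if k = i then D $$ (i, i) * f i else 0)"
    by (rule sum.cong) (use D i in \<open>auto simp: diagonal_mat_def\<close>)
  moreover have "(\<Sum>k<n. f k * D $$ (k, i)) = (\<Sum>k<n. if k = i then f i * D $$ (i, i) else 0)"
    by (rule sum.cong) (use D i in \<open>auto simp: diagonal_mat_def\<close>)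
  ultimately
  show "(\<Sum>k<n. D $$ (i, k) * f k) = D $$ (i, i) * f i"
    and "(\<Sum>k<n. f k * D $$ (k, i)) = f i * D $$ (i, i)"
    using i by simp_all
qed

context orthogonal_diagonalization
begin

lemma carrier_A: "A \<in> carrier_mat n n"
  using carrier_U carrier_D by (simp add: decomposition)

lemma orthogonal_U_transpose: "U * transpose_mat U = 1\<^sub>m n"
  by (rule orthogonal_mat_transpose_right[OF carrier_U orthogonal_U])

lemma char_poly_eq: "char_poly A = (\<Prod>i<n. [:- D $$ (i, i), 1:])"
proof -
  have "similar_mat A D" unfolding similar_mat_def
    using similar_mat_witI[OF orthogonal_U_transpose orthogonal_U decomposition carrier_A carrier_D carrier_U]
      by (force simp: carrier_U)
  then have "char_poly A = (\<Prod>a\<leftarrow>diag_mat D. [:- a, 1:])"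
    using char_poly_upper_triangular[OF carrier_D] diagonal_D carrier_D
    by (simp add: char_poly_similar diagonal_mat_def upper_triangular_def)
  also have "\<dots> = (\<Prod>i<n. [:- D $$ (i, i), 1:])"
    using carrier_D by (simp add: diag_mat_def prod.distinct_set_conv_list[symmetric] atLeast0LessThan comp_def)
  finally show ?thesis .
qed

lemma eigenvalue_iff: "eigenvalue A x \<longleftrightarrow> (\<exists>i<n. x = D $$ (i, i))"
  by (simp add: eigenvalue_root_char_poly[OF carrier_A] char_poly_eq poly_prod prod_zero_iff Bex_def)

lemma eigenvalue_of_real_iff:
  "eigenvalue (map_mat complex_of_real A) z \<longleftrightarrow> (\<exists>i<n. z = of_real (D $$ (i, i)))"
proof -
  interpret p: map_poly_comm_ring_hom complex_of_real ..
  have "map_mat complex_of_real A \<in> carrier_mat n n" using carrier_A by simp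
  then show ?thesis
    by (simp add: eigenvalue_root_char_poly of_real_hom.char_poly_hom[OF carrier_A] char_poly_eq
        p.hom_prod poly_prod prod_zero_iff Bex_def)
qed

lemma order_char_poly: "order x (char_poly A) = card {i. i < n \<and> D $$ (i, i) = x}"
  unfolding char_poly_eq by (rule order_prod_linear_factors)

lemma spectral_radius_eq:
  assumes "i < n" and "\<And>j. j < n \<Longrightarrow> \<bar>D $$ (j, j)\<bar> \<le> D $$ (i, i)"
  shows "spectral_radius (map_mat complex_of_real A) = D $$ (i, i)"
proof -
  have "norm ` spectrum (map_mat complex_of_real A) = (\<lambda>j. \<bar>D $$ (j, j)\<bar>) ` {..<n}"
    unfolding spectrum_def eigenvalue_of_real_iff by (force simp: image_iff)
  moreover have "D $$ (i, i) = \<bar>D $$ (i, i)\<bar>" using assms by force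
  ultimately show ?thesis
    unfolding spectral_radius_def using assms by (intro Max_eqI) auto
qed

lemma strictly_dominant_eigenvalue:
  assumes i: "i < n" and n: "1 < n" and dominant: "\<And>j. j < n \<Longrightarrow> j \<noteq> i \<Longrightarrow> \<bar>D $$ (j, j)\<bar> < D $$ (i, i)"
  shows "spectral_radius (map_mat complex_of_real A) = D $$ (i, i)"
    and "order (D $$ (i, i)) (char_poly A) = 1"
    and "eigenvalue A (D $$ (i, i))"
    and "\<And>\<mu>. eigenvalue A \<mu> \<Longrightarrow> \<mu> \<le> D $$ (i, i)"
proof -
  have "(if i = 0 then 1 else 0) < n" "(if i = 0 then 1 else 0) \<noteq> i" using n by auto
  then have "0 \<le> D $$ (i, i)" using dominant abs_ge_zero[of "D $$ (_, _)"] by fastforce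
  then have le: "\<bar>D $$ (j, j)\<bar> \<le> D $$ (i, i)" if "j < n" for j
    using dominant[OF that] by (cases "j = i") auto
  then show "spectral_radius (map_mat complex_of_real A) = D $$ (i, i)"
    by (rule spectral_radius_eq[OF i])
  have "{j. j < n \<and> D $$ (j, j) = D $$ (i, i)} = {i}" using dominant i by fastforce
  then show "order (D $$ (i, i)) (char_poly A) = 1" by (simp add: order_char_poly)
  show "eigenvalue A (D $$ (i, i))" using i by (auto simp: eigenvalue_iff)
  show "\<And>\<mu>. eigenvalue A \<mu> \<Longrightarrow> \<mu> \<le> D $$ (i, i)"
    using le by (force simp: eigenvalue_iff)
qed

lemma transpose_D: "transpose_mat D = D"
proof (rule eq_matI)
  fix i j assume "i < dim_row D" "j < dim_col D"
  then show "transpose_mat D $$ (i, j) = D $$ (i, j)"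
    using carrier_D diagonal_D by (cases "i = j") (auto simp: diagonal_mat_def)
qed (use carrier_D in auto)

lemma transpose_A: "transpose_mat A = A"
proof -
  have "transpose_mat A = transpose_mat (transpose_mat U) * transpose_mat (U * D)"
    unfolding decomposition by (rule transpose_mult) (use carrier_U carrier_D in auto)
  also have "transpose_mat (U * D) = transpose_mat D * transpose_mat U"
    by (rule transpose_mult) (use carrier_U carrier_D in auto)
  finally show ?thesis
    using carrier_U carrier_D by (simp add: transpose_D decomposition assoc_mult_mat[of _ n n _ n _ n])
qed

lemma frobenius_norm_eq: "frobenius_norm A = sqrt (\<Sum>i<n. (D $$ (i, i))\<^sup>2)"
proof -
  note assoc = assoc_mult_mat[of _ n n _ n _ n]
  have "A * transpose_mat A = U * D * (transpose_mat U * U) * D * transpose_mat U"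
    unfolding transpose_A using carrier_U carrier_D by (simp add: decomposition assoc)
  also have "\<dots> = U * (D * D) * transpose_mat U"
    using carrier_U carrier_D by (simp add: orthogonal_U assoc)
  finally have "mat_tr (A * transpose_mat A) = mat_tr (transpose_mat U * (U * (D * D)))"
    using carrier_U carrier_D by (simp add: mat_tr_mult_commute[of "U * (D * D)" n n])
  also have "transpose_mat U * (U * (D * D)) = D * D"
    using carrier_U carrier_D
    by (simp add: assoc_mult_mat[of "transpose_mat U" n n U n "D * D" n, symmetric] orthogonal_U)
  also have "mat_tr (D * D) = (\<Sum>i<n. (D $$ (i, i))\<^sup>2)"
    unfolding mat_tr_def using carrier_D diagonal_mat_sum_mult(1)[OF carrier_D diagonal_D]
    by (intro sum.cong) (auto simp: scalar_prod_def atLeast0LessThan power2_eq_square)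
  finally show ?thesis by (simp add: frobenius_norm_def)
qed

lemma eq_0_if_diagonal_0:
  assumes "\<And>i. i < n \<Longrightarrow> D $$ (i, i) = 0"
  shows "A = 0\<^sub>m n n"
proof -
  have "D = 0\<^sub>m n n"
  proof (rule eq_matI)
    fix i j assume "i < dim_row (0\<^sub>m n n)" "j < dim_col (0\<^sub>m n n)"
    then show "D $$ (i, j) = 0\<^sub>m n n $$ (i, j)"
      using assms carrier_D diagonal_D by (cases "i = j") (auto simp: diagonal_mat_def)
  qed (use carrier_D in auto)
  then show ?thesis using carrier_U by (simp add: decomposition)
qed

lemma quadratic_form_ones:
  "vec n (\<lambda>_. 1) \<bullet> (A *\<^sub>v vec n (\<lambda>_. 1)) = (\<Sum>i<n. D $$ (i, i) * (\<Sum>j<n. U $$ (j, i))\<^sup>2)"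
  and sum_squared_col_sums: "(\<Sum>i<n. (\<Sum>j<n. U $$ (j, i))\<^sup>2) = real n"
proof -
  define one where "one = vec n (\<lambda>_. 1 :: real)"
  define c where "c = transpose_mat U *\<^sub>v one"
  have one: "one \<in> carrier_vec n" and c: "c \<in> carrier_vec n" using carrier_U by (auto simp: one_def c_def)
  have c_eq: "c $ i = (\<Sum>j<n. U $$ (j, i))" if "i < n" for i
    using that carrier_U by (simp add: c_def one_def scalar_prod_def atLeast0LessThan)
  have "one \<bullet> (A *\<^sub>v one) = one \<bullet> (U *\<^sub>v (D *\<^sub>v c))"
    using carrier_U carrier_D one
    by (simp add: decomposition c_def assoc_mult_mat_vec[of _ n n _ n] del: assoc_mult_mat)
  also have "\<dots> = c \<bullet> (D *\<^sub>v c)"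
    using transpose_vec_mult_scalar[OF carrier_U _ one, of "D *\<^sub>v c"] c carrier_D by (simp add: c_def)
  also have "\<dots> = (\<Sum>i<n. D $$ (i, i) * (c $ i)\<^sup>2)"
    using c carrier_D diagonal_mat_sum_mult(1)[OF carrier_D diagonal_D]
    by (auto simp: scalar_prod_def atLeast0LessThan power2_eq_square mult_ac intro!: sum.cong)
  finally show "vec n (\<lambda>_. 1) \<bullet> (A *\<^sub>v vec n (\<lambda>_. 1)) = (\<Sum>i<n. D $$ (i, i) * (\<Sum>j<n. U $$ (j, i))\<^sup>2)"
    by (simp add: one_def c_eq)
  have "c \<bullet> c = one \<bullet> (U *\<^sub>v c)"
    using transpose_vec_mult_scalar[OF carrier_U c one] by (simp add: c_def)
  also have "U *\<^sub>v c = one"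
    using carrier_U one orthogonal_U_transpose by (simp add: c_def flip: assoc_mult_mat_vec)
  finally show "(\<Sum>i<n. (\<Sum>j<n. U $$ (j, i))\<^sup>2) = real n"
    using c by (simp add: one_def scalar_prod_def atLeast0LessThan power2_eq_square c_eq)
qed

lemma normalized_eigenvector:
  assumes i: "i < n"
  shows "\<exists>v. eigenvector A v (D $$ (i, i)) \<and> (\<Sum>j<n. (v $ j)\<^sup>2) = 1 \<and> (\<Sum>j<n. v $ j) = \<bar>\<Sum>j<n. U $$ (j, i)\<bar>"
proof -
  define \<sigma> :: real where "\<sigma> = (if 0 \<le> (\<Sum>j<n. U $$ (j, i)) then 1 else -1)"
  define v where "v = \<sigma> \<cdot>\<^sub>v col U i"
  have \<sigma>: "\<sigma> * \<sigma> = 1" "\<sigma> * (\<Sum>j<n. U $$ (j, i)) = \<bar>\<Sum>j<n. U $$ (j, i)\<bar>"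
    by (auto simp: \<sigma>_def)
  have v: "v \<in> carrier_vec n" and v_j: "\<And>j. j < n \<Longrightarrow> v $ j = \<sigma> * U $$ (j, i)"
    using carrier_U i by (auto simp: v_def)
  have "A * U = U * D"
    using carrier_U carrier_D
    by (simp add: decomposition assoc_mult_mat[of _ n n _ n _ n] orthogonal_U)
  have "(A * U) $$ (k, i) = U $$ (k, i) * D $$ (i, i)" if "k < n" for k
    unfolding \<open>A * U = U * D\<close> using that i carrier_U carrier_D
    by (simp add: scalar_prod_def atLeast0LessThan diagonal_mat_sum_mult(2)[OF carrier_D diagonal_D i])
  then have "A *\<^sub>v col U i = D $$ (i, i) \<cdot>\<^sub>v col U i"
    using i carrier_U carrier_A by (intro eq_vecI) (auto simp: mult.commute)
  then have "A *\<^sub>v v = D $$ (i, i) \<cdot>\<^sub>v v"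
    using carrier_A carrier_U i by (simp add: v_def mult_mat_vec smult_smult_assoc mult.commute)
  moreover have sq: "(\<Sum>j<n. (v $ j)\<^sup>2) = 1"
  proof -
    have "(\<Sum>j<n. (v $ j)\<^sup>2) = \<sigma> * \<sigma> * (\<Sum>j<n. U $$ (j, i) * U $$ (j, i))"
      by (simp add: v_j power2_eq_square sum_distrib_left mult_ac)
    also have "(\<Sum>j<n. U $$ (j, i) * U $$ (j, i)) = (transpose_mat U * U) $$ (i, i)"
      using i carrier_U by (simp add: scalar_prod_def atLeast0LessThan)
    finally show ?thesis using \<sigma> i by (simp add: orthogonal_U)
  qed
  moreover have "v \<noteq> 0\<^sub>v n"
    using sq by auto
  moreover have "(\<Sum>j<n. v $ j) = \<bar>\<Sum>j<n. U $$ (j, i)\<bar>"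
    using \<sigma>(2) by (simp add: v_j flip: sum_distrib_left)
  ultimately show ?thesis
    using v carrier_A by (intro exI[of _ v]) (simp add: eigenvector_def)
qed

end

lemma top_weight_strictly_dominant:
  fixes d c :: "nat \<Rightarrow> real" and s :: real
  assumes c: "(\<Sum>i<n. (c i)\<^sup>2) = real n" and s: "(real n)\<^sup>2 < 2 * s"
    and Q: "s * (\<Sum>i<n. (d i)\<^sup>2) \<le> (\<Sum>i<n. d i * (c i)\<^sup>2)\<^sup>2" "0 < (\<Sum>i<n. d i * (c i)\<^sup>2)"
    and top: "i0 < n" "\<And>i. i < n \<Longrightarrow> d i \<le> d i0" and j: "j < n" "j \<noteq> i0"
  shows "\<bar>d j\<bar> < d i0"
proof (rule ccontr)
  assume contra: "\<not> \<bar>d j\<bar> < d i0"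
  have s0: "0 \<le> s" using s zero_le_power2[of "real n"] by linarith
  let ?Q = "\<Sum>i<n. d i * (c i)\<^sup>2"
  have "?Q \<le> (\<Sum>i<n. d i0 * (c i)\<^sup>2)" by (intro sum_mono mult_right_mono) (auto simp: top)
  also have "\<dots> = d i0 * real n" using c by (simp flip: sum_distrib_left)
  finally have Qa: "?Q \<le> d i0 * real n" .
  then have "0 < d i0 * real n" using Q(2) by linarith
  then have a: "0 < d i0" by (simp add: zero_less_mult_iff)
  then have "(d i0)\<^sup>2 \<le> (d j)\<^sup>2" using contra by (simp add: abs_le_square_iff[symmetric])
  have "(d i0)\<^sup>2 + (d j)\<^sup>2 \<le> (\<Sum>i<n. (d i)\<^sup>2)"
    using sum_mono2[of "{..<n}" "{i0, j}" "\<lambda>i. (d i)\<^sup>2"] top j by auto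
  then have "s * (2 * (d i0)\<^sup>2) \<le> s * (\<Sum>i<n. (d i)\<^sup>2)"
    using \<open>(d i0)\<^sup>2 \<le> (d j)\<^sup>2\<close> s0 by (intro mult_left_mono) auto
  also have "\<dots> \<le> ?Q\<^sup>2" by (fact Q(1))
  also have "\<dots> \<le> (d i0 * real n)\<^sup>2" using Qa Q(2) by (intro power_mono) auto
  finally have "(d i0)\<^sup>2 * (2 * s) \<le> (d i0)\<^sup>2 * (real n)\<^sup>2" by (simp add: power_mult_distrib mult_ac)
  then show False using s a by simp
qed

lemma two_level_concentration:
  fixes a b x n k :: real
  assumes ab: "b < a" and k: "2 * k < n"
    and Q: "((n - k)\<^sup>2 + k\<^sup>2) * (a\<^sup>2 + b\<^sup>2) \<le> (a * x + b * (n - x))\<^sup>2" "0 < a * x + b * (n - x)"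
  shows "n - k \<le> x"
proof (rule ccontr)
  assume x: "\<not> n - k \<le> x"
  define s where "s = (n - k)\<^sup>2 + k\<^sup>2"
  have ab2: "0 < a\<^sup>2 + b\<^sup>2" using ab by (smt (verit) sum_power2_gt_zero_iff)
  show False
  proof (cases "x \<le> k")
    case True
    have "a * x + b * (n - x) = (a + b) * n / 2 + (a - b) * (x - n / 2)" by (simp add: field_simps)
    moreover have "(a - b) * (x - n / 2) \<le> 0" using ab True k by (intro mult_nonneg_nonpos) auto
    ultimately have bound: "(a * x + b * (n - x))\<^sup>2 \<le> ((a + b) * n / 2)\<^sup>2"
      using Q(2) by (intro power_mono) auto
    have "s * (a\<^sup>2 + b\<^sup>2) \<le> (a * x + b * (n - x))\<^sup>2" using Q(1) by (simp add: s_def)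
    also note bound
    also have "((a + b) * n / 2)\<^sup>2 = n\<^sup>2 / 2 * (a\<^sup>2 + b\<^sup>2) - ((a - b) * n)\<^sup>2 / 4"
      by (simp add: power2_eq_square field_simps)
    also have "\<dots> \<le> n\<^sup>2 / 2 * (a\<^sup>2 + b\<^sup>2)" by simp
    finally have "s \<le> n\<^sup>2 / 2" using ab2 by simp
    moreover have "2 * s - n\<^sup>2 = (n - 2 * k)\<^sup>2" by (simp add: s_def power2_eq_square algebra_simps)
    moreover have "0 < (n - 2 * k)\<^sup>2" using k by simp
    ultimately show False by linarith
  next
    case False
    \<comment> \<open>by Cauchy-Schwarz \<open>s \<le> x\<^sup>2 + (n - x)\<^sup>2\<close>, which fails strictly between \<open>k\<close> and \<open>n - k\<close>\<close>
    have "s * (a\<^sup>2 + b\<^sup>2) \<le> (a * x + b * (n - x))\<^sup>2" using Q(1) by (simp add: s_def)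
    also have "\<dots> \<le> (x\<^sup>2 + (n - x)\<^sup>2) * (a\<^sup>2 + b\<^sup>2)"
      using zero_le_power2[of "a * (n - x) - b * x"] by (simp add: power2_eq_square algebra_simps)
    finally have "s \<le> x\<^sup>2 + (n - x)\<^sup>2" using ab2 by simp
    moreover have "x\<^sup>2 + (n - x)\<^sup>2 - s = 2 * (x - k) * (x - (n - k))"
      by (simp add: s_def power2_eq_square algebra_simps)
    moreover have "2 * (x - k) * (x - (n - k)) < 0" using False x by (intro mult_pos_neg) auto
    ultimately show False by linarith
  qed
qed

lemma top_weight_concentration:
  fixes d c :: "nat \<Rightarrow> real" and n k :: nat
  assumes k: "1 \<le> k" "2 * k < n" and c: "(\<Sum>i<n. (c i)\<^sup>2) = real n"
    and Q: "((real n - real k)\<^sup>2 + (real k)\<^sup>2) * (\<Sum>i<n. (d i)\<^sup>2) \<le> (\<Sum>i<n. d i * (c i)\<^sup>2)\<^sup>2"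
      "0 < (\<Sum>i<n. d i * (c i)\<^sup>2)"
    and top: "i0 < n" "\<And>j. j < n \<Longrightarrow> j \<noteq> i0 \<Longrightarrow> \<bar>d j\<bar> < d i0"
  shows "real n - real k \<le> (c i0)\<^sup>2"
proof -
  let ?J = "{..<n} - {i0}"
  have "(if i0 = 0 then 1 else 0) \<in> ?J" using k by auto
  then have "?J \<noteq> {}" by blast
  obtain j1 where j1: "j1 \<in> ?J" and b: "\<And>j. j \<in> ?J \<Longrightarrow> \<bar>d j\<bar> \<le> \<bar>d j1\<bar>"
    by (rule finite_argmax[of ?J "\<lambda>j. \<bar>d j\<bar>"]) (use \<open>?J \<noteq> {}\<close> in auto)
  define a where "a = d i0"
  define b where "b = \<bar>d j1\<bar>"
  define x where "x = (c i0)\<^sup>2"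
  have split: "(\<Sum>i<n. f i) = f i0 + (\<Sum>j\<in>?J. f j)" for f :: "nat \<Rightarrow> real"
    using top(1) by (intro sum.remove) auto
  have rest: "(\<Sum>j\<in>?J. (c j)\<^sup>2) = real n - x"
    using c split[of "\<lambda>i. (c i)\<^sup>2"] by (simp add: x_def)
  have "(\<Sum>i<n. d i * (c i)\<^sup>2) = a * x + (\<Sum>j\<in>?J. d j * (c j)\<^sup>2)"
    by (simp add: split a_def x_def)
  also have "(\<Sum>j\<in>?J. d j * (c j)\<^sup>2) \<le> (\<Sum>j\<in>?J. b * (c j)\<^sup>2)"
    using b by (intro sum_mono mult_right_mono) (auto simp: b_def abs_le_D1)
  also have "\<dots> = b * (real n - x)"
    by (simp add: rest flip: sum_distrib_left)
  finally have Qab: "(\<Sum>i<n. d i * (c i)\<^sup>2) \<le> a * x + b * (real n - x)" by simp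
  have "a\<^sup>2 + b\<^sup>2 \<le> (\<Sum>i<n. (d i)\<^sup>2)"
    using sum_mono2[of "{..<n}" "{i0, j1}" "\<lambda>i. (d i)\<^sup>2"] top(1) j1 by (auto simp: a_def b_def)
  then have "((real n - real k)\<^sup>2 + (real k)\<^sup>2) * (a\<^sup>2 + b\<^sup>2)
      \<le> ((real n - real k)\<^sup>2 + (real k)\<^sup>2) * (\<Sum>i<n. (d i)\<^sup>2)"
    by (intro mult_left_mono) auto
  also have "\<dots> \<le> (\<Sum>i<n. d i * (c i)\<^sup>2)\<^sup>2" by (fact Q(1))
  also have "\<dots> \<le> (a * x + b * (real n - x))\<^sup>2" using Q(2) Qab by (intro power_mono) auto
  finally have "((real n - real k)\<^sup>2 + (real k)\<^sup>2) * (a\<^sup>2 + b\<^sup>2) \<le> (a * x + b * (real n - x))\<^sup>2" .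
  moreover have "b < a" using top(2) j1 by (simp add: a_def b_def)
  moreover have "2 * real k < real n" using k by linarith
  ultimately show ?thesis
    using two_level_concentration[of b a "real k" "real n" x] Q(2) Qab by (simp add: x_def)
qed

lemma top_weight_dominance:
  fixes d c :: "nat \<Rightarrow> real" and n k :: nat
  assumes k: "1 \<le> k" "2 * k < n" and c: "(\<Sum>i<n. (c i)\<^sup>2) = real n" and nonzero: "i1 < n" "d i1 \<noteq> 0"
    and Q: "sqrt ((real n - real k)\<^sup>2 + (real k)\<^sup>2) * sqrt (\<Sum>i<n. (d i)\<^sup>2) \<le> (\<Sum>i<n. d i * (c i)\<^sup>2)"
    and top: "i0 < n" "\<And>i. i < n \<Longrightarrow> d i \<le> d i0"
  shows "\<And>j. j < n \<Longrightarrow> j \<noteq> i0 \<Longrightarrow> \<bar>d j\<bar> < d i0" and "real n - real k \<le> (c i0)\<^sup>2"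
proof -
  define s where "s = (real n - real k)\<^sup>2 + (real k)\<^sup>2"
  have "0 < (\<Sum>i<n. (d i)\<^sup>2)" using nonzero by (intro sum_pos2[of _ i1]) auto
  moreover have "0 < s" using k by (simp add: s_def add_nonneg_pos)
  ultimately have "0 < sqrt s * sqrt (\<Sum>i<n. (d i)\<^sup>2)" by simp
  then have Q': "0 < (\<Sum>i<n. d i * (c i)\<^sup>2)" "s * (\<Sum>i<n. (d i)\<^sup>2) \<le> (\<Sum>i<n. d i * (c i)\<^sup>2)\<^sup>2"
    using Q by (auto simp: s_def real_sqrt_mult intro: sqrt_le_D)
  have "2 * s - (real n)\<^sup>2 = (real n - 2 * real k)\<^sup>2" by (simp add: s_def power2_eq_square algebra_simps)
  moreover have "0 < (real n - 2 * real k)\<^sup>2" using k by simp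
  ultimately have "(real n)\<^sup>2 < 2 * s" by linarith
  then show dominant: "\<And>j. j < n \<Longrightarrow> j \<noteq> i0 \<Longrightarrow> \<bar>d j\<bar> < d i0"
    using top_weight_strictly_dominant[OF c _ Q'(2,1) top] by blast
  show "real n - real k \<le> (c i0)\<^sup>2"
    using top_weight_concentration[OF k c Q'(2)[unfolded s_def] Q'(1) top(1) dominant] .
qed

lemma many_positive_entries:
  fixes v :: "nat \<Rightarrow> real"
  assumes unit: "(\<Sum>i<n. (v i)\<^sup>2) = 1"
    and sum: "0 \<le> (\<Sum>i<n. v i)" "real n - real k \<le> (\<Sum>i<n. v i)\<^sup>2"
    and k: "1 \<le> k" "k < n"
  shows "n - k + 1 \<le> card {i. i < n \<and> 0 \<le> v i}" and "n - k \<le> card {i. i < n \<and> 0 < v i}"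
proof -
  have bound: "(\<Sum>i\<in>X. v i)\<^sup>2 \<le> card X" if X: "X \<subseteq> {..<n}" for X
  proof -
    have "(\<Sum>i\<in>X. (v i)\<^sup>2) \<le> 1" using unit sum_mono2[OF _ X, of "\<lambda>i. (v i)\<^sup>2"] by simp
    then have "real (card X) * (\<Sum>i\<in>X. (v i)\<^sup>2) \<le> card X" by (simp add: mult_left_le)
    then show ?thesis using sum_squared_le_card_mult_sum_squares[of v X] by linarith
  qed
  have split: "(\<Sum>i<n. v i) = (\<Sum>i\<in>{..<n} - X. v i) + (\<Sum>i\<in>X. v i)" if "X \<subseteq> {..<n}" for X
    using that by (intro sum.subset_diff) auto
  define P where "P = {i. i < n \<and> 0 < v i}"
  have P: "P \<subseteq> {..<n}" by (auto simp: P_def)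
  have "(\<Sum>i\<in>{..<n} - P. v i) \<le> 0" by (intro sum_nonpos) (auto simp: P_def)
  then have "(\<Sum>i<n. v i) \<le> (\<Sum>i\<in>P. v i)" using split[OF P] by simp
  then have "(\<Sum>i<n. v i)\<^sup>2 \<le> (\<Sum>i\<in>P. v i)\<^sup>2" using sum(1) by (intro power_mono) auto
  also have "\<dots> \<le> card P" using bound[OF P] .
  finally have "(\<Sum>i<n. v i)\<^sup>2 \<le> card P" .
  then show "n - k \<le> card {i. i < n \<and> 0 < v i}" using sum(2) by (simp add: P_def)
  define N where "N = {i. i < n \<and> 0 \<le> v i}"
  show "n - k + 1 \<le> card N"
  proof (rule ccontr)
    assume "\<not> n - k + 1 \<le> card N"
    then have cN: "card N \<le> n - k" by simp
    have N: "N \<subseteq> {..<n}" by (auto simp: N_def)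
    have "\<not> {..<n} \<subseteq> N"
    proof
      assume "{..<n} \<subseteq> N"
      then have "N = {..<n}" using N by blast
      then show False using cN k by simp
    qed
    then have "{..<n} - N \<noteq> {}" by blast
    then have "(\<Sum>i\<in>{..<n} - N. v i) < (\<Sum>i\<in>{..<n} - N. 0)"
      by (intro sum_strict_mono) (auto simp: N_def)
    then have "(\<Sum>i<n. v i) < (\<Sum>i\<in>N. v i)" using split[OF N] by simp
    then have "(\<Sum>i<n. v i)\<^sup>2 < (\<Sum>i\<in>N. v i)\<^sup>2" using sum(1) by (intro power_strict_mono) auto
    also have "\<dots> \<le> card N" using bound N by blast
    finally show False using sum(2) cN k by linarith
  qed
qed

theorem theorem6:
  fixes A :: "real mat" and n k :: nat
  assumes "A \<in> carrier_mat n n"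
    and "transpose_mat A = A"
    and "A \<noteq> 0\<^sub>m n n"
    and "1 \<le> k" and "2 * k < n"
    and "vec n (\<lambda>_. 1) \<bullet> (A *\<^sub>v vec n (\<lambda>_. 1)) \<ge> sqrt ((real n - real k)^2 + (real k)^2) * frobenius_norm A"
  shows "let \<rho> = spectral_radius (map_mat complex_of_real A) in
           eigenvalue A \<rho>
         \<and> order \<rho> (char_poly A) = 1
         \<and> (\<forall>\<mu>. eigenvalue A \<mu> \<longrightarrow> \<mu> \<le> \<rho>)
         \<and> (\<exists>v. eigenvector A v \<rho>
               \<and> card {i. i < n \<and> v $ i \<ge> 0} \<ge> n - k + 1
               \<and> card {i. i < n \<and> v $ i > 0} \<ge> n - k)"
proof -
  obtain U D where "orthogonal_diagonalization n A U D"
    using real_symmetric_orthogonal_diagonalization[OF assms(1,2)] by blast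
  then interpret orthogonal_diagonalization n A U D .
  define d where "d i = D $$ (i, i)" for i
  define c where "c i = (\<Sum>j<n. U $$ (j, i))" for i
  obtain i0 where i0: "i0 < n" "\<And>i. i < n \<Longrightarrow> d i \<le> d i0"
    by (rule finite_argmax[of "{..<n}" d]) (use assms(5) in auto)
  obtain j where j: "j < n" "d j \<noteq> 0" using eq_0_if_diagonal_0 assms(3) by (auto simp: d_def)
  have "sqrt ((real n - real k)\<^sup>2 + (real k)\<^sup>2) * sqrt (\<Sum>i<n. (d i)\<^sup>2) \<le> (\<Sum>i<n. d i * (c i)\<^sup>2)"
    using assms(6) by (simp add: frobenius_norm_eq quadratic_form_ones d_def c_def)
  note dominance = top_weight_dominance[OF assms(4,5) sum_squared_col_sums[folded c_def] j this i0]
  obtain v where v: "eigenvector A v (d i0)" "(\<Sum>j<n. (v $ j)\<^sup>2) = 1" "(\<Sum>j<n. v $ j) = \<bar>c i0\<bar>"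
    using normalized_eigenvector[OF i0(1)] by (auto simp: d_def c_def)
  then have signs: "n - k + 1 \<le> card {i. i < n \<and> 0 \<le> v $ i}" "n - k \<le> card {i. i < n \<and> 0 < v $ i}"
    using many_positive_entries[of "\<lambda>i. v $ i" n k] dominance(2) assms(4,5) by auto
  have "1 < n" using assms(4,5) by simp
  note simple_top = strictly_dominant_eigenvalue[OF i0(1) this dominance(1)[unfolded d_def]]
  show ?thesis using simple_top v(1) signs by (auto simp: Let_def d_def)
qed

end
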